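(* Assume the genus expansion hypothesis (H$_G$). Let $\alpha\in U$ and $\xi>0$, and set $\gamma=\alpha^{\nu-1}/\xi$. Then for every integer $m\ge0$ there is a constant $K_{5,m}(\alpha,\gamma)$ such that, for all sufficiently large $n$, $$\Big|x_{n,\frac n\alpha,\frac{n^{\nu-1}}{\xi}}-\alpha\sum_{g=0}^m\frac{Z_g(\gamma n^{\nu-1})}{n^{2g}}\Big|<\frac{K_{5,m}(\alpha,\gamma)}{n^{2m+2+\frac{\nu-1}{\nu}}}.$$
   Context: Fix an integer $\nu\ge2$. For $N,r>0$ let $w_{N,r}(\lambda)=\exp[-N(\lambda^2/2+r\lambda^{2\nu}/(2\nu))]$, and let $x_{n,N,r}=b_n^2$ be the recurrence coefficients of the monic orthogonal polynomials: $\lambda\pi_n=\pi_{n+1}+b_n^2\pi_{n-1}$. Let $c_\nu=\binom{2\nu-1}{\nu-1}$. For $y\ge0$ let $Z_0(y)$ be the unique root in $(0,1]$ of $1=Z+c_\nu yZ^\nu$. For $g\ge1$ set $$Z_g(y)=\frac{Z_0(y)(Z_0(y)-1)P_{3g-2,\nu}(Z_0(y))}{(\nu-(\nu-1)Z_0(y))^{5g-1}},$$ where the $P_{3g-2,\nu}$ are fixed real polynomials of degree $3g-2$ (these are the generating functions for $2\nu$-valent 2-legged genus-$g$ maps). For fixed $\gamma>0$, $Z_g(\gamma n^{\nu-1})$ has a convergent expansion $\sum_{i\ge\nu-1}a_{i,g,\nu}(\gamma)n^{-i/\nu}$ for large $n$; in particular $Z_g(\gamma n^{\nu-1})=O(n^{-(\nu-1)/\nu})$.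 Hypothesis (H$_G$), the genus expansion: there is a neighborhood $U$ of $1$ such that for each $\alpha\in U$ and each integer $m\ge0$ there exist $K_{1,m}(\alpha)$ and $n_0$ such that, for all $n\ge n_0$ and all $r>0$, $$\Big|x_{n,n/\alpha,r}-\alpha\sum_{g=0}^m\frac{Z_g(\alpha^{\nu-1}r)}{n^{2g}}\Big|<\frac{K_{1,m}(\alpha)}{n^{2m+2}}.$$ *)

theory Defs
  imports "HOL-Analysis.Analysis" "HOL-Computational_Algebra.Polynomial"
begin

definition weight :: "nat \<Rightarrow> real \<Rightarrow> real \<Rightarrow> real \<Rightarrow> real" where
  "weight \<nu> N r t = exp (- N * (t^2 / 2 + r * t^(2*\<nu>) / (2 * real \<nu>)))"

definition monic_OPs :: "(real \<Rightarrow> real) \<Rightarrow> (nat \<Rightarrow> real poly) \<Rightarrow> bool" where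
  "monic_OPs w \<pi> \<longleftrightarrow>
     (\<forall>n. degree (\<pi> n) = n \<and> lead_coeff (\<pi> n) = 1 \<and>
        (\<forall>m<n. integrable lborel (\<lambda>t. poly (\<pi> n) t * poly (\<pi> m) t * w t) \<and>
               integral\<^sup>L lborel (\<lambda>t. poly (\<pi> n) t * poly (\<pi> m) t * w t) = 0))"

text \<open>Recurrence coefficient b_n^2 (n \<ge> 1): lambda pi_n = pi_{n+1} + b_n^2 pi_{n-1}.\<close>
definition rec_coeff :: "(real \<Rightarrow> real) \<Rightarrow> nat \<Rightarrow> real" where
  "rec_coeff w n = (THE b. \<forall>\<pi>. monic_OPs w \<pi> \<longrightarrow>
       [:0, 1:] * \<pi> n = \<pi> (Suc n) + smult b (\<pi> (n - 1)))"

definition xrec :: "nat \<Rightarrow> nat \<Rightarrow> real \<Rightarrow> real \<Rightarrow> real" where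
  "xrec \<nu> n N r = rec_coeff (weight \<nu> N r) n"

definition c_nu :: "nat \<Rightarrow> real" where
  "c_nu \<nu> = real ((2*\<nu> - 1) choose (\<nu> - 1))"

definition Z0 :: "nat \<Rightarrow> real \<Rightarrow> real" where
  "Z0 \<nu> y = (THE z. 0 < z \<and> z \<le> 1 \<and> 1 = z + c_nu \<nu> * y * z^\<nu>)"

text \<open>Z_g, parametrised by the family of polynomials P g = P_{3g-2,nu}.\<close>
definition Zg :: "nat \<Rightarrow> (nat \<Rightarrow> real poly) \<Rightarrow> nat \<Rightarrow> real \<Rightarrow> real" where
  "Zg \<nu> P g y = (if g = 0 then Z0 \<nu> y else
     Z0 \<nu> y * (Z0 \<nu> y - 1) * poly (P g) (Z0 \<nu> y) /
       (real \<nu> - (real \<nu> - 1) * Z0 \<nu> y) ^ (5*g - 1))"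

definition HG :: "nat \<Rightarrow> (nat \<Rightarrow> real poly) \<Rightarrow> real set \<Rightarrow> bool" where
  "HG \<nu> P U \<longleftrightarrow>
     (\<forall>\<alpha>\<in>U. \<forall>m::nat. \<exists>K n0. \<forall>n::nat\<ge>n0. \<forall>r>0.
        \<bar>xrec \<nu> n (real n / \<alpha>) r - \<alpha> * (\<Sum>g\<le>m. Zg \<nu> P g (\<alpha>^(\<nu>-1) * r) / real n ^ (2*g))\<bar>
          < K / real n ^ (2*m+2))"

end

theory Submission
  imports Defs
begin

text \<open>Apply (H_G) one order higher, along the curve r = n^(\<nu>-1)/\<xi>. The error of the truncated
  expansion is then the H_G remainder, of order n^(-2m-4), plus the dropped term
  \<alpha> Z_(m+1)(\<gamma> n^(\<nu>-1)) / n^(2m+2). Since \<nu> - (\<nu>-1) Z_0 \<ge> 1 and 0 < Z_0 \<le> 1, each Z_g with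
  g \<ge> 1 is O(Z_0), and the defining equation 1 = Z_0 + c_\<nu> y Z_0^\<nu> gives Z_0(y) \<le> (c_\<nu> y)^(-1/\<nu>),
  which at y = \<gamma> n^(\<nu>-1) is O(n^(-(\<nu>-1)/\<nu>)).\<close>

lemma c_nu_pos: "\<nu> \<ge> 1 \<Longrightarrow> c_nu \<nu> > 0"
  unfolding c_nu_def by simp

lemma Z0_root:
  assumes nu: "\<nu> \<ge> 1" and y: "y \<ge> 0"
  shows "0 < Z0 \<nu> y \<and> Z0 \<nu> y \<le> 1 \<and> 1 = Z0 \<nu> y + c_nu \<nu> * y * Z0 \<nu> y ^ \<nu>"
proof -
  define f where "f = (\<lambda>z::real. z + c_nu \<nu> * y * z ^ \<nu>)"
  have cy: "c_nu \<nu> * y \<ge> 0" using c_nu_pos[OF nu] y by simp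
  have f_strict_mono: "f w < f z" if "0 \<le> w" "w < z" for w z
  proof -
    have "c_nu \<nu> * y * w ^ \<nu> \<le> c_nu \<nu> * y * z ^ \<nu>"
      using that cy by (intro mult_left_mono power_mono) auto
    with \<open>w < z\<close> show ?thesis by (simp add: f_def)
  qed
  have f0: "f 0 = 0" using nu by (simp add: f_def zero_power)
  have "\<exists>z\<ge>0. z \<le> 1 \<and> f z = 1"
  proof (rule IVT)
    show "f 0 \<le> 1" using f0 by simp
    show "1 \<le> f 1" using cy by (simp add: f_def)
    show "\<forall>x. 0 \<le> x \<and> x \<le> 1 \<longrightarrow> isCont f x"
      unfolding f_def by (intro allI impI continuous_intros)
  qed simp
  then obtain z where z: "0 \<le> z" "z \<le> 1" "f z = 1" by blast
  with f0 have "0 < z" by (cases "z = 0") auto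
  have "\<exists>!z. 0 < z \<and> z \<le> 1 \<and> 1 = f z"
  proof (rule ex1I)
    show "0 < z \<and> z \<le> 1 \<and> 1 = f z" using z \<open>0 < z\<close> by simp
    fix w assume w: "0 < w \<and> w \<le> 1 \<and> 1 = f w"
    show "w = z"
      using f_strict_mono[of w z] f_strict_mono[of z w] w z by (cases w z rule: linorder_cases) auto
  qed
  then show ?thesis
    unfolding Z0_def f_def by (rule theI')
qed

lemma Z0_le_powr:
  assumes nu: "\<nu> \<ge> 1" and y: "y > 0"
  shows "Z0 \<nu> y \<le> (c_nu \<nu> * y) powr (-1 / real \<nu>)"
proof -
  define z where "z = Z0 \<nu> y"
  have cy: "c_nu \<nu> * y > 0" using c_nu_pos[OF nu] y by simp
  have root: "0 < z" "1 = z + c_nu \<nu> * y * z ^ \<nu>"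
    using Z0_root[OF nu] y by (auto simp: z_def)
  then have "z ^ \<nu> \<le> 1 / (c_nu \<nu> * y)"
    using cy by (simp add: field_simps)
  have "z = (z ^ \<nu>) powr (1 / real \<nu>)"
    using root nu by (simp add: powr_realpow[symmetric] powr_powr)
  also have "\<dots> \<le> (1 / (c_nu \<nu> * y)) powr (1 / real \<nu>)"
    using \<open>z ^ \<nu> \<le> 1 / (c_nu \<nu> * y)\<close> root by (intro powr_mono2) auto
  also have "\<dots> = (c_nu \<nu> * y) powr (-1 / real \<nu>)"
    using cy by (simp add: powr_minus_divide powr_divide)
  finally show ?thesis by (simp add: z_def)
qed

lemma poly_bounded_on_compact:
  fixes p :: "'a::{real_normed_field,heine_borel} poly"
  assumes "compact S"
  shows "\<exists>M. \<forall>z\<in>S. norm (poly p z) \<le> M"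
proof -
  have "compact (poly p ` S)"
    using assms by (intro compact_continuous_image continuous_intros)
  then obtain M where "\<forall>w \<in> poly p ` S. norm w \<le> M"
    by (meson bounded_iff compact_imp_bounded)
  then show ?thesis by blast
qed

lemma abs_Zg_le_Z0:
  assumes nu: "\<nu> \<ge> 1" and g: "g \<ge> 1"
  shows "\<exists>M\<ge>0. \<forall>y\<ge>0. \<bar>Zg \<nu> P g y\<bar> \<le> M * Z0 \<nu> y"
proof -
  obtain M where M: "\<forall>z\<in>{0..1}. \<bar>poly (P g) z\<bar> \<le> M"
    using poly_bounded_on_compact[of "{0..1::real}" "P g"] by auto
  have "\<bar>Zg \<nu> P g y\<bar> \<le> \<bar>M\<bar> * Z0 \<nu> y" if "y \<ge> 0" for y
  proof -
    define z where "z = Z0 \<nu> y"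
    have z: "0 < z" "z \<le> 1" using Z0_root[OF nu that] by (auto simp: z_def)
    have "(real \<nu> - 1) * z \<le> real \<nu> - 1" using z nu by (simp add: mult_left_le)
    then have denom: "1 \<le> (real \<nu> - (real \<nu> - 1) * z) ^ (5*g - 1)"
      by (simp add: one_le_power)
    have "\<bar>Zg \<nu> P g y\<bar> = \<bar>z * (z - 1) * poly (P g) z\<bar> / (real \<nu> - (real \<nu> - 1) * z) ^ (5*g - 1)"
      using g denom unfolding Zg_def z_def[symmetric] by (simp add: abs_divide)
    also have "\<dots> \<le> \<bar>z * (z - 1) * poly (P g) z\<bar>"
      using denom by (simp add: divide_le_eq mult_le_cancel_left1)
    also have "\<dots> = z * \<bar>z - 1\<bar> * \<bar>poly (P g) z\<bar>"
      using z by (simp add: abs_mult)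
    also have "\<dots> \<le> z * 1 * \<bar>M\<bar>"
      using z M by (intro mult_mono) (auto intro: order_trans[OF _ abs_ge_self])
    finally show ?thesis by (simp add: z_def mult.commute)
  qed
  then show ?thesis by (intro exI[of _ "\<bar>M\<bar>"]) auto
qed

lemma Zg_power_scaling_decay:
  assumes nu: "\<nu> \<ge> 1" and g: "g \<ge> 1" and \<gamma>: "\<gamma> > 0"
  shows "\<exists>B. \<forall>N>0. \<bar>Zg \<nu> P g (\<gamma> * N ^ (\<nu>-1))\<bar> \<le> B * N powr (- ((real \<nu> - 1) / real \<nu>))"
proof -
  obtain M where M: "M \<ge> 0" "\<forall>y\<ge>0. \<bar>Zg \<nu> P g y\<bar> \<le> M * Z0 \<nu> y"
    using abs_Zg_le_Z0[OF nu g] by blast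
  define B where "B = M * (c_nu \<nu> * \<gamma>) powr (-1 / real \<nu>)"
  have "\<bar>Zg \<nu> P g (\<gamma> * N ^ (\<nu>-1))\<bar> \<le> B * N powr (- ((real \<nu> - 1) / real \<nu>))"
    if N: "N > 0" for N :: real
  proof -
    have c\<gamma>: "c_nu \<nu> * \<gamma> > 0" using c_nu_pos[OF nu] \<gamma> by simp
    have "\<bar>Zg \<nu> P g (\<gamma> * N ^ (\<nu>-1))\<bar> \<le> M * Z0 \<nu> (\<gamma> * N ^ (\<nu>-1))"
      using M \<gamma> N by simp
    also have "\<dots> \<le> M * (c_nu \<nu> * \<gamma> * N ^ (\<nu>-1)) powr (-1 / real \<nu>)"
      using Z0_le_powr[OF nu, of "\<gamma> * N ^ (\<nu>-1)"] M \<gamma> N by (intro mult_left_mono) (auto simp: mult.assoc)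
    also have "(c_nu \<nu> * \<gamma> * N ^ (\<nu>-1)) powr (-1 / real \<nu>)
        = (c_nu \<nu> * \<gamma>) powr (-1 / real \<nu>) * N powr (real (\<nu>-1) * (-1 / real \<nu>))"
      using c\<gamma> N by (simp add: powr_mult powr_realpow[symmetric] powr_powr)
    also have "real (\<nu>-1) * (-1 / real \<nu>) = - ((real \<nu> - 1) / real \<nu>)"
      using nu by (simp add: of_nat_diff)
    finally show ?thesis by (simp add: B_def mult.assoc)
  qed
  then show ?thesis by blast
qed

lemma drop_last_term_of_expansion:
  fixes N a x S T K B d :: real and k :: nat
  assumes N: "N \<ge> 1" and a: "a > 0" and d: "0 \<le> d" "d \<le> 2"
    and expansion: "\<bar>x - a * (S + T / N ^ k)\<bar> < K / N ^ (k + 2)"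
    and T: "\<bar>T\<bar> \<le> B * N powr (-d)"
  shows "\<bar>x - a * S\<bar> < (\<bar>K\<bar> + a * B) / N powr (real k + d)"
proof -
  have N_pow: "N ^ j = N powr real j" for j
    using N by (simp add: powr_realpow)
  have "K / N ^ (k + 2) \<le> \<bar>K\<bar> / N powr (real k + d)"
    unfolding N_pow[of "k + 2"]
    by (rule frac_le) (use N d in \<open>auto intro: powr_mono\<close>)
  moreover have "\<bar>a * (T / N ^ k)\<bar> \<le> a * B / N powr (real k + d)"
  proof -
    have "\<bar>a * (T / N ^ k)\<bar> = a * \<bar>T\<bar> / N powr real k"
      using a N by (simp add: N_pow[of k] abs_mult abs_divide)
    also have "\<dots> \<le> a * (B * N powr (-d)) / N powr real k"
      using a T N by (intro divide_right_mono mult_left_mono) auto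
    also have "\<dots> = a * B / N powr (real k + d)"
      using N by (simp add: powr_minus powr_add field_simps)
    finally show ?thesis .
  qed
  moreover have "\<bar>x - a * S\<bar> \<le> \<bar>x - a * (S + T / N ^ k)\<bar> + \<bar>a * (T / N ^ k)\<bar>"
    by (rule order_trans[OF _ abs_triangle_ineq]) (simp add: algebra_simps)
  ultimately show ?thesis
    using expansion by (simp add: add_divide_distrib)
qed

lemma HG_along_power_coupling:
  assumes "HG \<nu> P U" and "\<alpha> \<in> U" and "\<xi> > 0"
  shows "\<exists>K n0. \<forall>n\<ge>n0. \<bar>xrec \<nu> n (real n / \<alpha>) (real n ^ (\<nu>-1) / \<xi>) - \<alpha> *
      ((\<Sum>g\<le>m. Zg \<nu> P g ((\<alpha>^(\<nu>-1) / \<xi>) * real n ^ (\<nu>-1)) / real n ^ (2*g))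
        + Zg \<nu> P (Suc m) ((\<alpha>^(\<nu>-1) / \<xi>) * real n ^ (\<nu>-1)) / real n ^ (2*m+2))\<bar>
      < K / real n ^ (2*m+2 + 2)"
proof -
  obtain K n0 where K: "\<forall>n\<ge>n0. \<forall>r>0.
      \<bar>xrec \<nu> n (real n / \<alpha>) r - \<alpha> * (\<Sum>g\<le>Suc m. Zg \<nu> P g (\<alpha>^(\<nu>-1) * r) / real n ^ (2*g))\<bar>
        < K / real n ^ (2 * Suc m + 2)"
    using assms(1,2) unfolding HG_def by blast
  have exponents: "2 * Suc m = 2*m+2" "2 * Suc m + 2 = 2*m+2 + 2" by simp_all
  have "\<bar>xrec \<nu> n (real n / \<alpha>) (real n ^ (\<nu>-1) / \<xi>) - \<alpha> *
      ((\<Sum>g\<le>m. Zg \<nu> P g ((\<alpha>^(\<nu>-1) / \<xi>) * real n ^ (\<nu>-1)) / real n ^ (2*g))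
        + Zg \<nu> P (Suc m) ((\<alpha>^(\<nu>-1) / \<xi>) * real n ^ (\<nu>-1)) / real n ^ (2*m+2))\<bar>
      < K / real n ^ (2*m+2 + 2)" if "n \<ge> max n0 1" for n
  proof -
    have "n \<ge> n0" and "real n ^ (\<nu>-1) / \<xi> > 0" using that assms(3) by auto
    with K have "\<bar>xrec \<nu> n (real n / \<alpha>) (real n ^ (\<nu>-1) / \<xi>) - \<alpha> *
        (\<Sum>g\<le>Suc m. Zg \<nu> P g (\<alpha>^(\<nu>-1) * (real n ^ (\<nu>-1) / \<xi>)) / real n ^ (2*g))\<bar>
        < K / real n ^ (2 * Suc m + 2)"
      by blast
    moreover have "\<alpha>^(\<nu>-1) * (real n ^ (\<nu>-1) / \<xi>) = (\<alpha>^(\<nu>-1) / \<xi>) * real n ^ (\<nu>-1)"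
      by simp
    ultimately show ?thesis
      by (simp only: sum.atMost_Suc exponents)
  qed
  then show ?thesis by blast
qed

lemma truncated_expansion_on_power_curve:
  assumes nu: "\<nu> \<ge> 1" and "HG \<nu> P U" and "\<alpha> \<in> U" and \<alpha>: "\<alpha> > 0" and "\<xi> > 0"
  shows "\<exists>K. \<forall>\<^sub>F n in sequentially.
           \<bar>xrec \<nu> n (real n / \<alpha>) (real n ^ (\<nu>-1) / \<xi>)
             - \<alpha> * (\<Sum>g\<le>m. Zg \<nu> P g ((\<alpha>^(\<nu>-1) / \<xi>) * real n ^ (\<nu>-1)) / real n ^ (2*g))\<bar>
           < K / real n powr (real (2*m+2) + (real \<nu> - 1) / real \<nu>)"
proof -
  obtain K n0 where K: "\<forall>n\<ge>n0. \<bar>xrec \<nu> n (real n / \<alpha>) (real n ^ (\<nu>-1) / \<xi>) - \<alpha> *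
      ((\<Sum>g\<le>m. Zg \<nu> P g ((\<alpha>^(\<nu>-1) / \<xi>) * real n ^ (\<nu>-1)) / real n ^ (2*g))
        + Zg \<nu> P (Suc m) ((\<alpha>^(\<nu>-1) / \<xi>) * real n ^ (\<nu>-1)) / real n ^ (2*m+2))\<bar>
      < K / real n ^ (2*m+2 + 2)"
    using HG_along_power_coupling[OF assms(2,3,5)] by blast
  obtain B where B: "\<forall>N>0. \<bar>Zg \<nu> P (Suc m) ((\<alpha>^(\<nu>-1) / \<xi>) * N ^ (\<nu>-1))\<bar>
      \<le> B * N powr (- ((real \<nu> - 1) / real \<nu>))"
    using Zg_power_scaling_decay[OF nu, of "Suc m" "\<alpha>^(\<nu>-1) / \<xi>" P] \<alpha> assms(5) by auto
  have d: "0 \<le> (real \<nu> - 1) / real \<nu>" "(real \<nu> - 1) / real \<nu> \<le> 2"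
    using nu by (auto simp: field_simps)
  show ?thesis
    by (intro exI[of _ "\<bar>K\<bar> + \<alpha> * B"] eventually_mono[OF eventually_ge_at_top[of "max n0 1"]]
        drop_last_term_of_expansion)
      (use K B d \<alpha> in auto)
qed

theorem lemmaA2:
  fixes \<nu> :: nat and P :: "nat \<Rightarrow> real poly" and U :: "real set" and \<alpha> \<xi> :: real
  assumes "\<nu> \<ge> 2"
    and "\<And>g. g \<ge> 1 \<Longrightarrow> degree (P g) = 3*g - 2"
    and "open U" and "1 \<in> U" and "U \<subseteq> {0<..}"
    and "HG \<nu> P U"
    and "\<alpha> \<in> U" and "\<xi> > 0"
  shows "\<forall>m::nat. \<exists>K. \<forall>\<^sub>F n in sequentially.
           \<bar>xrec \<nu> n (real n / \<alpha>) (real n ^ (\<nu>-1) / \<xi>)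
             - \<alpha> * (\<Sum>g\<le>m. Zg \<nu> P g ((\<alpha>^(\<nu>-1) / \<xi>) * real n ^ (\<nu>-1)) / real n ^ (2*g))\<bar>
           < K / real n powr (real (2*m+2) + (real \<nu> - 1) / real \<nu>)"
proof -
  have "\<nu> \<ge> 1" and "\<alpha> > 0" using assms(1,5,7) by auto
  then show ?thesis
    using truncated_expansion_on_power_curve[OF _ assms(6,7) _ assms(8)] by blast
qed

end
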